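(* Let $\Omega_1,\Omega_2,\sigma_1,\sigma_2>0$, let $M\ge 2$ be an integer, let $p\in\{1,\dots,M\}$, and let $c\in\mathbb{C}$; set $\mathbf{c}=[1,c]^T$ and let $\mathbf{i}_p\in\mathbb{C}^M$ be the $p$-th standard basis vector. Let $X_i\sim\mathcal{CN}(0,\Omega_i)$, $\mathbf{x}_i\sim\mathcal{CN}(\mathbf{0},\sigma_i^2\mathbf{I}_2)$ (random vectors in $\mathbb{C}^2$), and $\mathbf{y}_i\sim\mathcal{CN}(\mathbf{0},\sigma_i^2\mathbf{I}_M)$ (random vectors in $\mathbb{C}^M$), $i=1,2$, all mutually independent. Define $$\mathbf{X}_0=X_1X_2\mathbf{c}+X_2\mathbf{x}_1+\mathbf{x}_2,\qquad \mathbf{Y}_0=X_1X_2\mathbf{i}_p+X_2\mathbf{y}_1+\mathbf{y}_2.$$ Then for $\mathbf{x}=[x_1,x_2]^T\in\mathbb{C}^2$ the probability density of $\mathbf{X}_0$ is $$f_{\mathbf{X}_0}(\mathbf{x})=\frac{1}{(\pi\sigma_2^2)^2}\,I\!\left(\frac{\Omega_2\sigma_1^2}{\sigma_2^2},\ \Big[1+\frac{\Omega_1}{\sigma_1^2}(1+|c|^2)\Big]\frac{\Omega_2\sigma_1^2}{\sigma_2^2},\ \frac{|x_2-cx_1|^2}{(1+|c|^2)\sigma_2^2},\ \frac{|x_1+c^*x_2|^2}{(1+|c|^2)\sigma_2^2},\ 1\right),$$ and for $\mathbf{y}=[y_1,\dots,y_M]^T\in\mathbb{C}^M$ the probability density of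 $\mathbf{Y}_0$ is $$f_{\mathbf{Y}_0}(\mathbf{y})=\frac{1}{(\pi\sigma_2^2)^M}\,I\!\left(\frac{\Omega_2\sigma_1^2}{\sigma_2^2},\ \Big(1+\frac{\Omega_1}{\sigma_1^2}\Big)\frac{\Omega_2\sigma_1^2}{\sigma_2^2},\ \frac{\|\mathbf{y}\|^2-|y_p|^2}{\sigma_2^2},\ \frac{|y_p|^2}{\sigma_2^2},\ M-1\right).$$
   Context: $\mathcal{CN}(\boldsymbol{\mu},\boldsymbol{\Sigma})$ denotes a circularly symmetric complex Gaussian distribution with mean $\boldsymbol{\mu}$ and covariance $\boldsymbol{\Sigma}$; densities on $\mathbb{C}^n$ are taken with respect to Lebesgue measure on $\mathbb{R}^{2n}$. For $\epsilon_1,\epsilon_2>0$, $\beta_1,\beta_2\ge 0$, $\lambda>0$, define $$I(\epsilon_1,\epsilon_2,\beta_1,\beta_2,\lambda)=\int_0^\infty \frac{\exp\!\Big[-\Big(x+\frac{\beta_1}{1+\epsilon_1x}+\frac{\beta_2}{1+\epsilon_2x}\Big)\Big]}{(1+\epsilon_1x)^{\lambda}(1+\epsilon_2x)}\,dx.$$ *)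

theory Defs
  imports "HOL-Probability.Probability"
begin

definition Iint :: "real \<Rightarrow> real \<Rightarrow> real \<Rightarrow> real \<Rightarrow> real \<Rightarrow> real" where
  "Iint e1 e2 b1 b2 lam =
     (LBINT x:{0..}. exp (- (x + b1 / (1 + e1 * x) + b2 / (1 + e2 * x)))
                      / ((1 + e1 * x) powr lam * (1 + e2 * x)))"

definition cgauss_density :: "real \<Rightarrow> complex \<Rightarrow> real" where
  "cgauss_density Om z = exp (- (cmod z)\<^sup>2 / Om) / (pi * Om)"

definition cgauss_vec_density :: "real \<Rightarrow> complex ^ 'n \<Rightarrow> real" where
  "cgauss_vec_density sg z =
     exp (- (norm z)\<^sup>2 / sg\<^sup>2) / (pi * sg\<^sup>2) ^ CARD('n)"

text \<open>Used in a chain to express mutual independence of a finite family.\<close>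
definition indep_rv :: "'a measure \<Rightarrow> ('a \<Rightarrow> 'b::topological_space) \<Rightarrow> ('a \<Rightarrow> 'c::topological_space) \<Rightarrow> bool" where
  "indep_rv P X Y \<longleftrightarrow> X \<in> borel_measurable P \<and> Y \<in> borel_measurable P \<and>
     (\<forall>A\<in>sets borel. \<forall>B\<in>sets borel.
        measure P (X -` A \<inter> Y -` B \<inter> space P) =
        measure P (X -` A \<inter> space P) * measure P (Y -` B \<inter> space P))"

end

theory Submission
  imports Defs
begin

text \<open>Conditionally on \<open>X1 = a\<close> and \<open>X2 = b\<close>, the vector \<open>X1 X2 w + X2 u + v\<close> is circularly
  symmetric Gaussian with mean \<open>a b w\<close> and covariance \<open>(|b|\<^sup>2 \<sigma>1\<^sup>2 + \<sigma>2\<^sup>2) I\<close>, because \<open>b u + v\<close> is a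
  sum of independent isotropic Gaussians. Averaging over \<open>a \<sim> CN(0, \<Omega>1)\<close> is again a Gaussian
  integral, evaluated by completing the square; the result depends on \<open>b\<close> only through
  \<open>t = |b|\<^sup>2\<close>. Since \<open>|X2|\<^sup>2 / \<Omega>2\<close> is standard exponential, averaging over \<open>b\<close> becomes an
  integral over \<open>\<tau> = t / \<Omega>2 \<ge> 0\<close>, which is the integral \<open>I\<close>. The two densities of the theorem
  are the cases \<open>w = [1, c]\<close> and \<open>w = i\<^sub>p\<close>.\<close>

section \<open>Gaussian integrals\<close>

lemma nn_integral_exp_neg_square: "(\<integral>\<^sup>+x. ennreal (exp (- x\<^sup>2)) \<partial>lborel) = ennreal (sqrt pi)"
proof -
  interpret prob_space "density lborel (normal_density 0 (sqrt (1/2)))"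
    by (rule prob_space_normal_density) simp
  have "normal_density 0 (sqrt (1/2)) x = exp (- x\<^sup>2) / sqrt pi" for x
    by (simp add: normal_density_def)
  then have "(\<integral>\<^sup>+x. ennreal (1 / sqrt pi) * ennreal (exp (- x\<^sup>2)) \<partial>lborel) = 1"
    using emeasure_space_1 by (simp add: emeasure_density ennreal_mult''[symmetric])
  then have "ennreal (sqrt pi) * (ennreal (1 / sqrt pi) * (\<integral>\<^sup>+x. ennreal (exp (- x\<^sup>2)) \<partial>lborel)) = ennreal (sqrt pi)"
    by (simp add: nn_integral_cmult)
  then show ?thesis
    by (simp add: mult.assoc[symmetric] ennreal_mult''[symmetric])
qed

lemma nn_integral_exp_neg_norm_square:
  "(\<integral>\<^sup>+x. ennreal (exp (- (norm (x::'a::euclidean_space))\<^sup>2)) \<partial>lborel) = ennreal (sqrt pi ^ DIM('a))"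
proof -
  have "exp (- (norm x)\<^sup>2) = (\<Prod>b\<in>Basis. exp (- (x \<bullet> b)\<^sup>2))" for x :: 'a
    unfolding power2_norm_eq_inner euclidean_inner[of x x]
    by (simp add: exp_sum[symmetric] sum_negf power2_eq_square)
  then have "(\<integral>\<^sup>+x. ennreal (exp (- (norm (x::'a))\<^sup>2)) \<partial>lborel)
      = (\<integral>\<^sup>+x. (\<Prod>b\<in>(Basis::'a set). ennreal (exp (- (x \<bullet> b)\<^sup>2))) \<partial>lborel)"
    by (simp add: prod_ennreal)
  also have "\<dots> = (\<Prod>b\<in>(Basis::'a set). \<integral>\<^sup>+t. ennreal (exp (- t\<^sup>2)) \<partial>lborel)"
    by (rule nn_integral_lborel_prod) auto
  finally show ?thesis
    by (simp add: nn_integral_exp_neg_square ennreal_power)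
qed

lemma nn_integral_exp_neg_scaled_dist:
  fixes m :: "'a::euclidean_space"
  assumes "al > 0"
  shows "(\<integral>\<^sup>+u. ennreal (exp (- (al * (norm (u - m))\<^sup>2))) \<partial>lborel) = ennreal (sqrt (pi / al) ^ DIM('a))"
proof -
  define c where "c = 1 / sqrt al"
  have c: "c > 0" and al_c: "al * c\<^sup>2 = 1"
    using assms by (simp_all add: c_def power_divide)
  have "(\<integral>\<^sup>+u. ennreal (exp (- (al * (norm (u - m))\<^sup>2))) \<partial>lborel)
      = (\<integral>\<^sup>+x. ennreal (c ^ DIM('a)) * ennreal (exp (- (al * (norm (m + c *\<^sub>R x - m))\<^sup>2))) \<partial>lborel)"
    by (subst lborel_affine[of c m]) (use c in \<open>simp_all add: nn_integral_density nn_integral_distr\<close>)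
  also have "\<dots> = (\<integral>\<^sup>+x. ennreal (c ^ DIM('a)) * ennreal (exp (- (norm (x::'a))\<^sup>2)) \<partial>lborel)"
  proof -
    have scale: "al * (c * norm x)\<^sup>2 = (norm x)\<^sup>2" for x :: 'a
      using al_c by (simp add: power_mult_distrib)
    show ?thesis
      using c by (intro nn_integral_cong) (simp add: scale)
  qed
  also have "\<dots> = ennreal (c ^ DIM('a) * sqrt pi ^ DIM('a))"
    using c by (simp add: nn_integral_cmult nn_integral_exp_neg_norm_square ennreal_mult'')
  finally show ?thesis
    using assms by (simp add: c_def real_sqrt_divide power_divide)
qed

lemma norm_diff_square: "(norm (y - x))\<^sup>2 = (norm y)\<^sup>2 - 2 * (x \<bullet> y) + (norm (x::'a::real_inner))\<^sup>2"
  by (simp add: power2_norm_eq_inner inner_diff_left inner_diff_right inner_commute)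

lemma complete_square_norm:
  fixes x v :: "'a::real_inner"
  assumes "al \<noteq> 0"
  shows "2 * (x \<bullet> v) - al * (norm x)\<^sup>2 = (norm v)\<^sup>2 / al - al * (norm (x - v /\<^sub>R al))\<^sup>2"
  using assms
  by (simp add: power2_norm_eq_inner inner_diff_left inner_diff_right inner_commute[of v x]
      field_simps)

lemma nn_integral_exp_neg_quadratic:
  fixes v :: "'a::euclidean_space"
  assumes "al > 0"
  shows "(\<integral>\<^sup>+u. ennreal (exp (2 * (u \<bullet> v) - al * (norm u)\<^sup>2)) \<partial>lborel)
    = ennreal (sqrt (pi / al) ^ DIM('a) * exp ((norm v)\<^sup>2 / al))"
proof -
  have "(\<integral>\<^sup>+u. ennreal (exp (2 * (u \<bullet> v) - al * (norm u)\<^sup>2)) \<partial>lborel)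
      = (\<integral>\<^sup>+u. ennreal (exp ((norm v)\<^sup>2 / al)) * ennreal (exp (- (al * (norm (u - v /\<^sub>R al))\<^sup>2))) \<partial>lborel)"
    using assms by (intro nn_integral_cong)
      (simp add: complete_square_norm ennreal_mult''[symmetric] exp_add[symmetric])
  also have "\<dots> = ennreal (exp ((norm v)\<^sup>2 / al)) * ennreal (sqrt (pi / al) ^ DIM('a))"
    using assms by (simp add: nn_integral_cmult nn_integral_exp_neg_scaled_dist)
  finally show ?thesis
    by (simp add: ennreal_mult''[symmetric] mult.commute)
qed

lemma nn_integral_mult_exp_quadratic:
  fixes v :: "'a::euclidean_space"
  assumes "C \<ge> 0" and "al > 0" and "DIM('a) = 2 * n"
  shows "(\<integral>\<^sup>+u. ennreal (C * exp (2 * (u \<bullet> v) - al * (norm u)\<^sup>2)) \<partial>lborel)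
    = ennreal (C * ((pi / al) ^ n * exp ((norm v)\<^sup>2 / al)))"
proof -
  have "(\<integral>\<^sup>+u. ennreal (C * exp (2 * (u \<bullet> v) - al * (norm u)\<^sup>2)) \<partial>lborel)
      = ennreal C * (\<integral>\<^sup>+u. ennreal (exp (2 * (u \<bullet> v) - al * (norm u)\<^sup>2)) \<partial>lborel)"
    using assms(1) by (simp add: ennreal_mult' nn_integral_cmult)
  also have "\<dots> = ennreal C * ennreal ((pi / al) ^ n * exp ((norm v)\<^sup>2 / al))"
    unfolding nn_integral_exp_neg_quadratic[OF assms(2)] using assms(2,3) by (simp add: power_mult)
  finally show ?thesis
    using assms(1) by (simp add: ennreal_mult')
qed

definition vec_cinner :: "complex^'n \<Rightarrow> complex^'n \<Rightarrow> complex" where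
  "vec_cinner w y = (\<Sum>i\<in>UNIV. cnj (w$i) * y$i)"

lemma norm_vec_complex_square: "(norm (x::complex^'n))\<^sup>2 = (\<Sum>i\<in>UNIV. (cmod (x$i))\<^sup>2)"
  by (simp add: norm_vec_def L2_set_def sum_nonneg)

lemma norm_vector_scalar_mult: "norm (b *s (c::complex^'n)) = cmod b * norm c"
proof -
  have "(norm (b *s c))\<^sup>2 = (cmod b * norm c)\<^sup>2"
    by (simp add: norm_vec_complex_square power_mult_distrib norm_mult sum_distrib_left)
  then show ?thesis by (simp add: power2_eq_iff_nonneg)
qed

lemma inner_vector_scalar_mult: "(b *s (c::complex^'n)) \<bullet> y = c \<bullet> (cnj b *s y)"
  by (simp add: inner_vec_def inner_complex_def algebra_simps)

lemma inner_scalar_mult_vector: "(a *s (w::complex^'n)) \<bullet> y = a \<bullet> vec_cinner w y"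
proof -
  have Re_mult_cnj: "x \<bullet> z = Re (x * cnj z)" for x z :: complex
    by (simp add: inner_complex_def)
  show ?thesis
    by (simp add: inner_vec_def vec_cinner_def Re_mult_cnj Re_sum sum_distrib_left algebra_simps)
qed

lemma norm_diff_vector_scalar_mult_square:
  fixes c y :: "complex^'n"
  shows "(norm (y - b *s c))\<^sup>2 = (norm y)\<^sup>2 - 2 * (c \<bullet> (cnj b *s y)) + (cmod b)\<^sup>2 * (norm c)\<^sup>2"
  by (simp add: norm_diff_square inner_vector_scalar_mult norm_vector_scalar_mult power_mult_distrib)

lemma norm_diff_scalar_mult_vector_square:
  fixes w y :: "complex^'n"
  shows "(norm (y - a *s w))\<^sup>2 = (norm y)\<^sup>2 - 2 * (a \<bullet> vec_cinner w y) + (cmod a)\<^sup>2 * (norm w)\<^sup>2"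
  by (simp add: norm_diff_square inner_scalar_mult_vector norm_vector_scalar_mult power_mult_distrib)

lemma continuous_on_vector_scalar_mult[continuous_intros]:
  fixes f :: "'a::topological_space \<Rightarrow> 'b::real_normed_algebra"
  shows "continuous_on S f \<Longrightarrow> continuous_on S g \<Longrightarrow> continuous_on S (\<lambda>x. f x *s g x)"
  unfolding vector_scalar_mult_def by (intro continuous_intros)

lemma borel_measurable_vector_scalar_mult[measurable (raw)]:
  fixes f :: "'a \<Rightarrow> complex" and g :: "'a \<Rightarrow> complex^'n"
  assumes "f \<in> borel_measurable M" and "g \<in> borel_measurable M"
  shows "(\<lambda>x. f x *s g x) \<in> borel_measurable M"
proof -
  have "(\<lambda>p::complex \<times> (complex^'n). fst p *s snd p) \<in> borel_measurable borel"
    by (intro borel_measurable_continuous_onI continuous_intros)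
  from measurable_compose[OF borel_measurable_Pair[OF assms] this] show ?thesis
    by simp
qed

definition cgauss_cov_density :: "real \<Rightarrow> complex^'n \<Rightarrow> real" where
  "cgauss_cov_density S v = exp (- (norm v)\<^sup>2 / S) / (pi * S) ^ CARD('n)"

lemma cgauss_vec_density_eq_cov: "cgauss_vec_density s = cgauss_cov_density (s\<^sup>2)"
  by (simp add: fun_eq_iff cgauss_vec_density_def cgauss_cov_density_def)

lemma cgauss_cov_density_nonneg: "S \<ge> 0 \<Longrightarrow> cgauss_cov_density S v \<ge> 0"
  by (simp add: cgauss_cov_density_def)

lemma borel_measurable_cgauss_cov_density[measurable (raw)]:
  fixes f :: "'a \<Rightarrow> complex^'n"
  assumes [measurable]: "S \<in> borel_measurable M" "f \<in> borel_measurable M"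
  shows "(\<lambda>x. cgauss_cov_density (S x) (f x)) \<in> borel_measurable M"
  unfolding cgauss_cov_density_def by measurable

lemma gaussian_convolution_constants:
  fixes S1 S2 B Y :: real
  assumes S1: "S1 > 0" and S2: "S2 > 0" and B: "B \<ge> 0"
  shows "exp (- Y / S2) / ((pi * S1) ^ n * (pi * S2) ^ n)
      * ((pi / (1 / S1 + B / S2)) ^ n * exp (B * Y / S2\<^sup>2 / (1 / S1 + B / S2)))
    = exp (- Y / (B * S1 + S2)) / (pi * (B * S1 + S2)) ^ n"
proof -
  define T where "T = B * S1 + S2"
  have T: "T > 0"
    using S1 S2 B by (simp add: T_def add_nonneg_pos)
  have al: "1 / S1 + B / S2 = T / (S1 * S2)"
    using S1 S2 by (simp add: T_def field_simps)
  have "- Y / S2 + B * Y / S2\<^sup>2 / (T / (S1 * S2)) = - Y / T"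
    using S1 S2 T by (simp add: field_simps power2_eq_square) (simp add: T_def algebra_simps)
  then have "exp (- Y / S2) * exp (B * Y / S2\<^sup>2 / (T / (S1 * S2))) = exp (- Y / T)"
    by (simp add: exp_add[symmetric])
  moreover have "(pi / (T / (S1 * S2))) ^ n / ((pi * S1) ^ n * (pi * S2) ^ n) = 1 / (pi * T) ^ n"
    using S1 S2 T by (simp add: power_divide power_mult_distrib field_simps)
  moreover have "exp (- Y / S2) / ((pi * S1) ^ n * (pi * S2) ^ n)
      * ((pi / (T / (S1 * S2))) ^ n * exp (B * Y / S2\<^sup>2 / (T / (S1 * S2))))
    = (exp (- Y / S2) * exp (B * Y / S2\<^sup>2 / (T / (S1 * S2))))
      * ((pi / (T / (S1 * S2))) ^ n / ((pi * S1) ^ n * (pi * S2) ^ n))"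
    by (simp add: mult_ac)
  ultimately show ?thesis
    unfolding al by (simp add: T_def)
qed

lemma gaussian_rank_one_constants:
  fixes Om s K Y Q :: real
  assumes Om: "Om > 0" and s: "s > 0" and K: "K \<ge> 0"
  shows "exp (- Y / s) / (pi * Om * (pi * s) ^ n)
      * ((pi / (1 / Om + K / s)) ^ 1 * exp (Q / s\<^sup>2 / (1 / Om + K / s)))
    = s / (s + Om * K) / (pi * s) ^ n * exp (- Y / s + Om * Q / (s * (s + Om * K)))"
proof -
  define T where "T = s + Om * K"
  have T: "T > 0"
    using Om s K by (simp add: T_def add_pos_nonneg)
  have al: "1 / Om + K / s = T / (Om * s)"
    using Om s by (simp add: T_def field_simps)
  have "exp (- Y / s) * exp (Q / s\<^sup>2 / (T / (Om * s))) = exp (- Y / s + Om * Q / (s * T))"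
    using Om s T by (simp add: exp_add[symmetric] field_simps power2_eq_square)
  moreover have "(pi / (T / (Om * s))) / (pi * Om * (pi * s) ^ n) = s / T / (pi * s) ^ n"
    using Om s T by (simp add: field_simps)
  moreover have "exp (- Y / s) / (pi * Om * (pi * s) ^ n) * ((pi / (T / (Om * s))) ^ 1 * exp (Q / s\<^sup>2 / (T / (Om * s))))
    = (exp (- Y / s) * exp (Q / s\<^sup>2 / (T / (Om * s)))) * ((pi / (T / (Om * s))) / (pi * Om * (pi * s) ^ n))"
    by (simp add: mult_ac)
  ultimately show ?thesis
    unfolding al by (simp add: T_def mult_ac)
qed

lemma nn_integral_cgauss_cov_convolution:
  fixes y :: "complex^'n"
  assumes S1: "S1 > 0" and S2: "S2 > 0"
  shows "(\<integral>\<^sup>+c. ennreal (cgauss_cov_density S1 c * cgauss_cov_density S2 (y - b *s c)) \<partial>lborel)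
    = ennreal (cgauss_cov_density ((cmod b)\<^sup>2 * S1 + S2) y)"
proof -
  define al where "al = 1 / S1 + (cmod b)\<^sup>2 / S2"
  define v where "v = (1 / S2) *\<^sub>R (cnj b *s y)"
  define K where "K = exp (- (norm y)\<^sup>2 / S2) / ((pi * S1) ^ CARD('n) * (pi * S2) ^ CARD('n))"
  have al: "al > 0"
    using S1 S2 by (simp add: al_def add_pos_nonneg)
  have K: "K \<ge> 0"
    using S1 S2 by (simp add: K_def)
  have pointwise: "cgauss_cov_density S1 c * cgauss_cov_density S2 (y - b *s c)
      = K * exp (2 * (c \<bullet> v) - al * (norm c)\<^sup>2)" for c
  proof -
    have "cgauss_cov_density S1 c * cgauss_cov_density S2 (y - b *s c)
        = exp (- ((norm c)\<^sup>2 / S1 + (norm (y - b *s c))\<^sup>2 / S2)) / ((pi * S1) ^ CARD('n) * (pi * S2) ^ CARD('n))"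
      by (simp add: cgauss_cov_density_def exp_add[symmetric] diff_divide_distrib add_divide_distrib)
    also have "(norm c)\<^sup>2 / S1 + (norm (y - b *s c))\<^sup>2 / S2 = al * (norm c)\<^sup>2 - 2 * (c \<bullet> v) + (norm y)\<^sup>2 / S2"
      using S2 by (simp add: norm_diff_vector_scalar_mult_square al_def v_def field_simps)
    finally show ?thesis
      by (simp add: K_def exp_add exp_diff exp_minus field_simps)
  qed
  have "(\<integral>\<^sup>+c. ennreal (cgauss_cov_density S1 c * cgauss_cov_density S2 (y - b *s c)) \<partial>lborel)
      = ennreal (K * ((pi / al) ^ CARD('n) * exp ((norm v)\<^sup>2 / al)))"
    unfolding pointwise by (rule nn_integral_mult_exp_quadratic[OF K al]) simp
  also have "K * ((pi / al) ^ CARD('n) * exp ((norm v)\<^sup>2 / al)) = cgauss_cov_density ((cmod b)\<^sup>2 * S1 + S2) y"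
  proof -
    have "(norm v)\<^sup>2 = (cmod b)\<^sup>2 * (norm y)\<^sup>2 / S2\<^sup>2"
      using S2 by (simp add: v_def norm_vector_scalar_mult power_mult_distrib power_divide)
    then show ?thesis
      using gaussian_convolution_constants[OF S1 S2 zero_le_power2[of "cmod b"], where Y="(norm y)\<^sup>2" and n="CARD('n)"]
      by (simp add: K_def al_def cgauss_cov_density_def)
  qed
  finally show ?thesis .
qed

lemma nn_integral_cgauss_rank_one:
  fixes y w :: "complex^'n"
  assumes Om: "Om > 0" and s: "s > 0"
  shows "(\<integral>\<^sup>+a. ennreal (cgauss_density Om a * cgauss_cov_density s (y - a *s w)) \<partial>lborel)
    = ennreal (s / (s + Om * (norm w)\<^sup>2) / (pi * s) ^ CARD('n)
        * exp (- (norm y)\<^sup>2 / s + Om * (cmod (vec_cinner w y))\<^sup>2 / (s * (s + Om * (norm w)\<^sup>2))))"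
proof -
  define al where "al = 1 / Om + (norm w)\<^sup>2 / s"
  define v where "v = (1 / s) *\<^sub>R vec_cinner w y"
  define C where "C = exp (- (norm y)\<^sup>2 / s) / ((pi * Om) * (pi * s) ^ CARD('n))"
  have al: "al > 0"
    using Om s by (simp add: al_def add_pos_nonneg)
  have C: "C \<ge> 0"
    using Om s by (simp add: C_def)
  have pointwise: "cgauss_density Om a * cgauss_cov_density s (y - a *s w)
      = C * exp (2 * (a \<bullet> v) - al * (norm a)\<^sup>2)" for a
  proof -
    have "cgauss_density Om a * cgauss_cov_density s (y - a *s w)
        = exp (- ((cmod a)\<^sup>2 / Om + (norm (y - a *s w))\<^sup>2 / s)) / ((pi * Om) * (pi * s) ^ CARD('n))"
      by (simp add: cgauss_density_def cgauss_cov_density_def exp_add[symmetric]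
          diff_divide_distrib add_divide_distrib)
    also have "(cmod a)\<^sup>2 / Om + (norm (y - a *s w))\<^sup>2 / s = al * (norm a)\<^sup>2 - 2 * (a \<bullet> v) + (norm y)\<^sup>2 / s"
      using s by (simp add: norm_diff_scalar_mult_vector_square al_def v_def field_simps)
    finally show ?thesis
      by (simp add: C_def exp_add exp_diff exp_minus field_simps)
  qed
  have "(\<integral>\<^sup>+a. ennreal (cgauss_density Om a * cgauss_cov_density s (y - a *s w)) \<partial>lborel)
      = ennreal (C * ((pi / al) ^ 1 * exp ((norm v)\<^sup>2 / al)))"
    unfolding pointwise by (rule nn_integral_mult_exp_quadratic[OF C al]) simp
  also have "C * ((pi / al) ^ 1 * exp ((norm v)\<^sup>2 / al))
      = s / (s + Om * (norm w)\<^sup>2) / (pi * s) ^ CARD('n)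
        * exp (- (norm y)\<^sup>2 / s + Om * (cmod (vec_cinner w y))\<^sup>2 / (s * (s + Om * (norm w)\<^sup>2)))"
    using gaussian_rank_one_constants[OF Om s zero_le_power2[of "norm w"],
        where Y="(norm y)\<^sup>2" and Q="(cmod (vec_cinner w y))\<^sup>2" and n="CARD('n)"]
    by (simp add: C_def al_def v_def power_divide)
  finally show ?thesis .
qed

section \<open>Polar coordinates in the complex plane\<close>

lemma emeasure_lborel_cmod_square_less:
  "emeasure lborel {z::complex. (cmod z)\<^sup>2 < r} = ennreal (pi * max 0 r)"
proof (cases "r > 0")
  case True
  have "(cmod z)\<^sup>2 < r \<longleftrightarrow> cmod z < sqrt r" for z
    by (metis abs_norm_cancel real_sqrt_abs real_sqrt_less_iff)
  then have "{z::complex. (cmod z)\<^sup>2 < r} = ball 0 (sqrt r)"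
    by (simp only: set_eq_iff mem_ball_0 mem_Collect_eq simp_thms)
  then show ?thesis
    using True emeasure_ball[of "sqrt r" "0::complex"] by (simp add: unit_ball_vol_2)
next
  case False
  then have "{z::complex. (cmod z)\<^sup>2 < r} = {}"
    by (auto simp: not_less) (smt (verit) zero_le_power2)
  then show ?thesis
    using False by simp
qed

text \<open>The square modulus is negated so that the rays \<open>{x<..}\<close> have finite measure, as
  \<open>measure_eqI_lessThan\<close> requires.\<close>

lemma distr_lborel_neg_cmod_square:
  "distr (lborel :: complex measure) borel (\<lambda>z. - (cmod z)\<^sup>2) = density lborel (\<lambda>t. ennreal pi * indicator {..0} t)"
proof (rule measure_eqI_lessThan)
  fix x :: real
  have "emeasure (distr (lborel :: complex measure) borel (\<lambda>z. - (cmod z)\<^sup>2)) {x<..}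
      = emeasure lborel {z::complex. (cmod z)\<^sup>2 < - x}"
    by (subst emeasure_distr) (auto intro!: arg_cong2[where f=emeasure])
  also have "\<dots> = ennreal (pi * max 0 (- x))"
    by (rule emeasure_lborel_cmod_square_less)
  finally have distr_ray: "emeasure (distr lborel borel (\<lambda>z::complex. - (cmod z)\<^sup>2)) {x<..} = ennreal (pi * max 0 (- x))" .
  have "emeasure (density lborel (\<lambda>t. ennreal pi * indicator {..0} t)) {x<..}
      = (\<integral>\<^sup>+t. ennreal pi * indicator {x<..0} t \<partial>lborel)"
    by (subst emeasure_density) (auto intro!: nn_integral_cong split: split_indicator)
  also have "\<dots> = ennreal pi * emeasure lborel {x<..0}"
    by (simp add: nn_integral_cmult)
  also have "\<dots> = ennreal (pi * max 0 (- x))"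
    by (cases "x \<le> 0") (auto simp: ennreal_mult''[symmetric])
  finally show "emeasure (distr lborel borel (\<lambda>z::complex. - (cmod z)\<^sup>2)) {x<..}
      = emeasure (density lborel (\<lambda>t. ennreal pi * indicator {..0} t)) {x<..}"
    using distr_ray by simp
  show "emeasure (distr lborel borel (\<lambda>z::complex. - (cmod z)\<^sup>2)) {x<..} < \<infinity>"
    using distr_ray by simp
qed simp_all

lemma nn_integral_cmod_square:
  fixes f :: "real \<Rightarrow> ennreal"
  assumes [measurable]: "f \<in> borel_measurable borel"
  shows "(\<integral>\<^sup>+z. f ((cmod (z::complex))\<^sup>2) \<partial>lborel) = ennreal pi * (\<integral>\<^sup>+t. f t * indicator {0..} t \<partial>lborel)"
proof -
  have "(\<integral>\<^sup>+z. f ((cmod (z::complex))\<^sup>2) \<partial>lborel)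
      = (\<integral>\<^sup>+t. f (- t) \<partial>distr (lborel :: complex measure) borel (\<lambda>z. - (cmod z)\<^sup>2))"
    by (subst nn_integral_distr) auto
  also have "\<dots> = ennreal pi * (\<integral>\<^sup>+t. f (- t) * indicator {..0} t \<partial>lborel)"
    unfolding distr_lborel_neg_cmod_square
    by (subst nn_integral_density) (auto simp: nn_integral_cmult[symmetric] mult_ac)
  also have "(\<integral>\<^sup>+t. f (- t) * indicator {..0} t \<partial>lborel) = (\<integral>\<^sup>+t. f t * indicator {0..} t \<partial>lborel)"
    by (subst nn_integral_real_affine[where c="-1" and t=0])
      (auto intro!: nn_integral_cong split: split_indicator)
  finally show ?thesis .
qed

lemma nn_integral_cgauss_density_radial:
  fixes f :: "real \<Rightarrow> ennreal"
  assumes Om: "Om > 0" and [measurable]: "f \<in> borel_measurable borel"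
  shows "(\<integral>\<^sup>+b. ennreal (cgauss_density Om b) * f ((cmod b)\<^sup>2) \<partial>lborel)
    = (\<integral>\<^sup>+\<tau>. ennreal (exp (- \<tau>)) * f (Om * \<tau>) * indicator {0..} \<tau> \<partial>lborel)"
proof -
  have "(\<integral>\<^sup>+b. ennreal (cgauss_density Om b) * f ((cmod b)\<^sup>2) \<partial>lborel)
      = ennreal pi * (\<integral>\<^sup>+t. ennreal (exp (- t / Om) / (pi * Om)) * f t * indicator {0..} t \<partial>lborel)"
    unfolding cgauss_density_def
    by (rule nn_integral_cmod_square[where f="\<lambda>t. ennreal (exp (- t / Om) / (pi * Om)) * f t"]) simp
  also have "\<dots> = (\<integral>\<^sup>+t. ennreal (exp (- t / Om) / Om) * f t * indicator {0..} t \<partial>lborel)"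
    using Om by (subst nn_integral_cmult[symmetric])
      (auto simp: ennreal_mult'[symmetric] mult.assoc[symmetric] intro!: nn_integral_cong)
  also have "\<dots> = ennreal Om * (\<integral>\<^sup>+\<tau>. ennreal (exp (- (Om * \<tau>) / Om) / Om) * f (Om * \<tau>)
      * indicator {0..} (Om * \<tau>) \<partial>lborel)"
    using nn_integral_real_affine[where c=Om and t=0 and f="\<lambda>t. ennreal (exp (- t / Om) / Om) * f t * indicator {0..} t"] Om
    by simp
  also have "\<dots> = (\<integral>\<^sup>+\<tau>. ennreal (exp (- \<tau>)) * f (Om * \<tau>) * indicator {0..} \<tau> \<partial>lborel)"
    using Om by (subst nn_integral_cmult[symmetric])
      (auto simp: ennreal_mult'[symmetric] mult.assoc[symmetric] zero_le_mult_iff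
        intro!: nn_integral_cong split: split_indicator)
  finally show ?thesis .
qed

section \<open>Independence and densities of images\<close>

lemma indep_rv_compose:
  fixes X :: "'a \<Rightarrow> 'b::topological_space" and Y :: "'a \<Rightarrow> 'c::topological_space"
    and g :: "'c \<Rightarrow> 'd::topological_space"
  assumes indep: "indep_rv P X Y" and g: "g \<in> borel_measurable borel"
  shows "indep_rv P X (\<lambda>\<omega>. g (Y \<omega>))"
  unfolding indep_rv_def
proof (intro conjI ballI)
  show "X \<in> borel_measurable P" and "(\<lambda>\<omega>. g (Y \<omega>)) \<in> borel_measurable P"
    using indep g by (auto simp: indep_rv_def)
  fix A :: "'b set" and B :: "'d set"
  assume A: "A \<in> sets borel" and B: "B \<in> sets borel"
  have "g -` B \<in> sets borel"
    using g B by (metis measurable_sets space_borel vimage_Int Int_UNIV_right)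
  moreover have "(\<lambda>\<omega>. g (Y \<omega>)) -` B = Y -` (g -` B)"
    by auto
  ultimately show "measure P (X -` A \<inter> (\<lambda>\<omega>. g (Y \<omega>)) -` B \<inter> space P)
      = measure P (X -` A \<inter> space P) * measure P ((\<lambda>\<omega>. g (Y \<omega>)) -` B \<inter> space P)"
    using indep A by (simp add: indep_rv_def)
qed

lemma distributed_pair_indep_rv:
  fixes X :: "'a \<Rightarrow> 'b::euclidean_space" and Y :: "'a \<Rightarrow> 'c::euclidean_space"
  assumes P: "prob_space P" and indep: "indep_rv P X Y"
    and X: "distributed P lborel X p" and Y: "distributed P lborel Y q"
  shows "distributed P lborel (\<lambda>\<omega>. (X \<omega>, Y \<omega>)) (\<lambda>(x, y). p x * q y)"
proof -
  interpret prob_space P by (rule P)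
  have [measurable]: "X \<in> borel_measurable P" "Y \<in> borel_measurable P"
    using indep by (auto simp: indep_rv_def)
  have "distr P lborel X \<Otimes>\<^sub>M distr P lborel Y = distr P (lborel \<Otimes>\<^sub>M lborel) (\<lambda>\<omega>. (X \<omega>, Y \<omega>))"
  proof (rule pair_measure_eqI)
    show "sigma_finite_measure (distr P lborel X)" "sigma_finite_measure (distr P lborel Y)"
      by (simp_all add: prob_space_distr prob_space_imp_sigma_finite)
    show "sets (distr P lborel X \<Otimes>\<^sub>M distr P lborel Y) = sets (distr P (lborel \<Otimes>\<^sub>M lborel) (\<lambda>\<omega>. (X \<omega>, Y \<omega>)))"
      by (simp add: sets_pair_measure_cong[OF sets_distr sets_distr])
    fix A B assume "A \<in> sets (distr P lborel X)" and "B \<in> sets (distr P lborel Y)"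
    then have A: "A \<in> sets borel" and B: "B \<in> sets borel"
      by auto
    have "emeasure (distr P (lborel \<Otimes>\<^sub>M lborel) (\<lambda>\<omega>. (X \<omega>, Y \<omega>))) (A \<times> B) = emeasure P (X -` A \<inter> Y -` B \<inter> space P)"
      using A B by (subst emeasure_distr) (auto intro!: arg_cong2[where f=emeasure])
    also have "\<dots> = ennreal (measure P (X -` A \<inter> space P) * measure P (Y -` B \<inter> space P))"
      using indep A B by (simp add: indep_rv_def emeasure_eq_measure)
    also have "\<dots> = emeasure (distr P lborel X) A * emeasure (distr P lborel Y) B"
      using A B by (simp add: emeasure_distr emeasure_eq_measure ennreal_mult)
    finally show "emeasure (distr P lborel X) A * emeasure (distr P lborel Y) B
        = emeasure (distr P (lborel \<Otimes>\<^sub>M lborel) (\<lambda>\<omega>. (X \<omega>, Y \<omega>))) (A \<times> B)" ..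
  qed
  then have "distributed P (lborel \<Otimes>\<^sub>M lborel) (\<lambda>\<omega>. (X \<omega>, Y \<omega>)) (\<lambda>(x, y). p x * q y)"
    by (intro distributed_joint_indep'[OF _ _ X Y]) (simp_all add: lborel.sigma_finite_measure_axioms)
  then show ?thesis
    by (simp add: lborel_prod)
qed

lemma distributed_image:
  fixes Z :: "'a \<Rightarrow> 'b::euclidean_space" and \<Phi> :: "'b \<Rightarrow> 'c::euclidean_space"
  assumes Z: "distributed P lborel Z q"
    and \<Phi>[measurable]: "\<Phi> \<in> borel_measurable borel" and [measurable]: "F \<in> borel_measurable borel"
    and eq: "\<And>A. A \<in> sets borel \<Longrightarrow>
      (\<integral>\<^sup>+z. q z * indicator A (\<Phi> z) \<partial>lborel) = (\<integral>\<^sup>+x. F x * indicator A x \<partial>lborel)"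
  shows "distributed P lborel (\<lambda>\<omega>. \<Phi> (Z \<omega>)) F"
proof -
  have [measurable]: "Z \<in> borel_measurable P"
    using distributed_measurable[OF Z] by simp
  have "distr P lborel (\<lambda>\<omega>. \<Phi> (Z \<omega>)) = density lborel F"
  proof (rule measure_eqI)
    fix A assume "A \<in> sets (distr P lborel (\<lambda>\<omega>. \<Phi> (Z \<omega>)))"
    then have A[measurable]: "A \<in> sets borel"
      by simp
    have "emeasure (distr P lborel (\<lambda>\<omega>. \<Phi> (Z \<omega>))) A = emeasure P (Z -` (\<Phi> -` A) \<inter> space P)"
      by (subst emeasure_distr) (auto intro!: arg_cong2[where f=emeasure])
    also have "\<dots> = (\<integral>\<^sup>+z. q z * indicator (\<Phi> -` A) z \<partial>lborel)"
      by (rule distributed_emeasure[OF Z]) (simp add: measurable_sets_borel[OF \<Phi> A])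
    also have "\<dots> = (\<integral>\<^sup>+x. F x * indicator A x \<partial>lborel)"
      by (simp add: eq[symmetric] indicator_vimage[symmetric])
    finally show "emeasure (distr P lborel (\<lambda>\<omega>. \<Phi> (Z \<omega>))) A = emeasure (density lborel F) A"
      by (simp add: emeasure_density)
  qed simp
  then show ?thesis
    by (simp add: distributed_def)
qed

lemma nn_integral_lborel_pair:
  fixes f :: "'a::euclidean_space \<times> 'b::euclidean_space \<Rightarrow> ennreal"
  assumes "f \<in> borel_measurable (borel \<Otimes>\<^sub>M borel)"
  shows "(\<integral>\<^sup>+p. f p \<partial>lborel) = (\<integral>\<^sup>+x. \<integral>\<^sup>+y. f (x, y) \<partial>lborel \<partial>lborel)"
proof -
  have "f \<in> borel_measurable (lborel \<Otimes>\<^sub>M lborel)"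
    using assms by (simp add: measurable_cong_sets[OF sets_pair_measure_cong[OF sets_lborel sets_lborel] refl])
  then show ?thesis
    by (simp add: lborel.nn_integral_fst lborel_prod)
qed

lemma nn_integral_lborel_swap:
  fixes f :: "'a::euclidean_space \<Rightarrow> 'b::euclidean_space \<Rightarrow> ennreal"
  assumes "case_prod f \<in> borel_measurable (borel \<Otimes>\<^sub>M borel)"
  shows "(\<integral>\<^sup>+x. \<integral>\<^sup>+y. f x y \<partial>lborel \<partial>lborel) = (\<integral>\<^sup>+y. \<integral>\<^sup>+x. f x y \<partial>lborel \<partial>lborel)"
proof -
  have "case_prod f \<in> borel_measurable (lborel \<Otimes>\<^sub>M lborel)"
    using assms by (simp add: measurable_cong_sets[OF sets_pair_measure_cong[OF sets_lborel sets_lborel] refl])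
  then show ?thesis
    by (rule lborel_pair.Fubini'[symmetric])
qed

lemma nn_integral_lborel_tuple4:
  fixes f :: "'a::euclidean_space \<times> 'b::euclidean_space \<times> 'c::euclidean_space \<times> 'd::euclidean_space \<Rightarrow> ennreal"
  assumes f[measurable]: "f \<in> borel_measurable (borel \<Otimes>\<^sub>M borel \<Otimes>\<^sub>M borel \<Otimes>\<^sub>M borel)"
  shows "(\<integral>\<^sup>+p. f p \<partial>lborel) = (\<integral>\<^sup>+a. \<integral>\<^sup>+b. \<integral>\<^sup>+c. \<integral>\<^sup>+d. f (a, b, c, d) \<partial>lborel \<partial>lborel \<partial>lborel \<partial>lborel)"
proof -
  have "f \<in> borel_measurable (borel \<Otimes>\<^sub>M borel)"
    using f by (simp add: borel_prod)
  moreover have "(\<lambda>q. f (a, q)) \<in> borel_measurable (borel \<Otimes>\<^sub>M borel)" for a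
  proof -
    have "(\<lambda>q. f (a, q)) \<in> borel_measurable (borel \<Otimes>\<^sub>M borel \<Otimes>\<^sub>M borel)"
      by measurable
    then show ?thesis
      by (simp add: borel_prod)
  qed
  moreover have "(\<lambda>q. f (a, b, q)) \<in> borel_measurable (borel \<Otimes>\<^sub>M borel)" for a b
    by measurable
  ultimately show ?thesis
    by (simp add: nn_integral_lborel_pair)
qed

lemma nn_integral_lborel_add:
  fixes f :: "'a::euclidean_space \<Rightarrow> ennreal"
  assumes "f \<in> borel_measurable borel"
  shows "(\<integral>\<^sup>+d. f (m + d) \<partial>lborel) = (\<integral>\<^sup>+x. f x \<partial>lborel)"
  using assms by (subst lborel_distr_plus[of m, symmetric]) (simp add: nn_integral_distr)

section \<open>The density as a Gaussian mixture\<close>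

lemma nn_integral_cgauss_noise_indicator:
  fixes m :: "complex^'n" and k :: ennreal
  assumes S1: "S1 > 0" and S2: "S2 > 0" and A[measurable]: "A \<in> sets borel"
  shows "(\<integral>\<^sup>+c. \<integral>\<^sup>+d. k * ennreal (cgauss_cov_density S1 c)
      * (ennreal (cgauss_cov_density S2 d) * indicator A (m + b *s c + d)) \<partial>lborel \<partial>lborel)
    = (\<integral>\<^sup>+x. k * (ennreal (cgauss_cov_density ((cmod b)\<^sup>2 * S1 + S2) (x - m)) * indicator A x) \<partial>lborel)"
proof -
  let ?h1 = "\<lambda>c. ennreal (cgauss_cov_density S1 c)" and ?h2 = "\<lambda>d. ennreal (cgauss_cov_density S2 d)"
  let ?g = "\<lambda>c x. ennreal (cgauss_cov_density S1 c * cgauss_cov_density S2 ((x - m) - b *s c))"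
  have "(\<integral>\<^sup>+d. k * ?h1 c * (?h2 d * indicator A (m + b *s c + d)) \<partial>lborel)
      = (\<integral>\<^sup>+x. k * ?h1 c * (?h2 (x - (m + b *s c)) * indicator A x) \<partial>lborel)" for c
    using nn_integral_lborel_add[of "\<lambda>x. k * ?h1 c * (?h2 (x - (m + b *s c)) * indicator A x)" "m + b *s c"]
    by simp
  then have "(\<integral>\<^sup>+c. \<integral>\<^sup>+d. k * ?h1 c * (?h2 d * indicator A (m + b *s c + d)) \<partial>lborel \<partial>lborel)
      = (\<integral>\<^sup>+c. \<integral>\<^sup>+x. k * indicator A x * ?g c x \<partial>lborel \<partial>lborel)"
    using S1 by (simp add: ennreal_mult'[OF cgauss_cov_density_nonneg] diff_diff_add mult_ac)
  also have "\<dots> = (\<integral>\<^sup>+x. \<integral>\<^sup>+c. k * indicator A x * ?g c x \<partial>lborel \<partial>lborel)"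
    by (rule nn_integral_lborel_swap) measurable
  also have "\<dots> = (\<integral>\<^sup>+x. k * (ennreal (cgauss_cov_density ((cmod b)\<^sup>2 * S1 + S2) (x - m)) * indicator A x) \<partial>lborel)"
    using S1 S2 by (simp add: nn_integral_cmult nn_integral_cgauss_cov_convolution mult_ac)
  finally show ?thesis .
qed

lemma nn_integral_lborel_rotate3:
  fixes f :: "'a::euclidean_space \<times> 'b::euclidean_space \<times> 'c::euclidean_space \<Rightarrow> ennreal"
  assumes [measurable]: "f \<in> borel_measurable (borel \<Otimes>\<^sub>M borel \<Otimes>\<^sub>M borel)"
  shows "(\<integral>\<^sup>+a. \<integral>\<^sup>+b. \<integral>\<^sup>+x. f (a, b, x) \<partial>lborel \<partial>lborel \<partial>lborel)
    = (\<integral>\<^sup>+x. \<integral>\<^sup>+b. \<integral>\<^sup>+a. f (a, b, x) \<partial>lborel \<partial>lborel \<partial>lborel)"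
proof -
  have "(\<integral>\<^sup>+a. \<integral>\<^sup>+b. \<integral>\<^sup>+x. f (a, b, x) \<partial>lborel \<partial>lborel \<partial>lborel)
      = (\<integral>\<^sup>+a. \<integral>\<^sup>+x. \<integral>\<^sup>+b. f (a, b, x) \<partial>lborel \<partial>lborel \<partial>lborel)"
    by (intro nn_integral_cong nn_integral_lborel_swap) measurable
  also have "\<dots> = (\<integral>\<^sup>+x. \<integral>\<^sup>+a. \<integral>\<^sup>+b. f (a, b, x) \<partial>lborel \<partial>lborel \<partial>lborel)"
    by (rule nn_integral_lborel_swap) measurable
  also have "\<dots> = (\<integral>\<^sup>+x. \<integral>\<^sup>+b. \<integral>\<^sup>+a. f (a, b, x) \<partial>lborel \<partial>lborel \<partial>lborel)"
    by (intro nn_integral_cong nn_integral_lborel_swap) measurable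
  finally show ?thesis .
qed

lemma distributed_cascaded_gaussian_mixture:
  fixes P :: "'a measure" and X1 X2 :: "'a \<Rightarrow> complex" and u v :: "'a \<Rightarrow> complex^'n"
  assumes P: "prob_space P" and S1: "S1 > 0" and S2: "S2 > 0"
    and D1: "distributed P lborel X1 p1" and D2: "distributed P lborel X2 p2"
    and Du: "distributed P lborel u (\<lambda>z. ennreal (cgauss_cov_density S1 z))"
    and Dv: "distributed P lborel v (\<lambda>z. ennreal (cgauss_cov_density S2 z))"
    and I1: "indep_rv P X1 (\<lambda>\<omega>. (X2 \<omega>, u \<omega>, v \<omega>))"
    and I2: "indep_rv P X2 (\<lambda>\<omega>. (u \<omega>, v \<omega>))"
    and I3: "indep_rv P u v"
  shows "distributed P lborel (\<lambda>\<omega>. (X1 \<omega> * X2 \<omega>) *s w + X2 \<omega> *s u \<omega> + v \<omega>)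
    (\<lambda>x. \<integral>\<^sup>+b. p2 b * (\<integral>\<^sup>+a. p1 a * ennreal (cgauss_cov_density ((cmod b)\<^sup>2 * S1 + S2) (x - (a * b) *s w)) \<partial>lborel) \<partial>lborel)"
    (is "distributed P lborel _ ?F")
proof -
  have [measurable]: "p1 \<in> borel_measurable borel" "p2 \<in> borel_measurable borel"
    using D1 D2 by (auto dest: distributed_borel_measurable)
  let ?h1 = "\<lambda>c. ennreal (cgauss_cov_density S1 c)" and ?h2 = "\<lambda>d. ennreal (cgauss_cov_density S2 d)"
  let ?h = "\<lambda>b y. ennreal (cgauss_cov_density ((cmod b)\<^sup>2 * S1 + S2) y)"
  let ?q = "\<lambda>(a, b, c, d). p1 a * p2 b * ?h1 c * ?h2 d"
  define \<Phi> :: "complex \<times> complex \<times> (complex^'n) \<times> (complex^'n) \<Rightarrow> complex^'n"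
    where "\<Phi> = (\<lambda>(a, b, c, d). (a * b) *s w + b *s c + d)"
  have \<Phi>[measurable]: "\<Phi> \<in> borel_measurable borel"
    unfolding \<Phi>_def case_prod_beta by (intro borel_measurable_continuous_onI continuous_intros)
  then have [measurable]: "\<Phi> \<in> borel_measurable (borel \<Otimes>\<^sub>M borel \<Otimes>\<^sub>M borel \<Otimes>\<^sub>M borel)"
    by (simp add: borel_prod)
  have "distributed P lborel (\<lambda>\<omega>. (X1 \<omega>, X2 \<omega>, u \<omega>, v \<omega>)) ?q"
    using distributed_pair_indep_rv[OF P I1 D1 distributed_pair_indep_rv[OF P I2 D2 distributed_pair_indep_rv[OF P I3 Du Dv]]]
    by (simp add: split_beta' mult.assoc)
  then have "distributed P lborel (\<lambda>\<omega>. \<Phi> (X1 \<omega>, X2 \<omega>, u \<omega>, v \<omega>)) ?F"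
  proof (rule distributed_image)
    fix A :: "(complex^'n) set"
    assume A[measurable]: "A \<in> sets borel"
    let ?Q = "\<lambda>a b x. p1 a * p2 b * (?h b (x - (a * b) *s w) * indicator A x)"
    have "(\<integral>\<^sup>+z. ?q z * indicator A (\<Phi> z) \<partial>lborel)
        = (\<integral>\<^sup>+a. \<integral>\<^sup>+b. \<integral>\<^sup>+c. \<integral>\<^sup>+d. p1 a * p2 b * ?h1 c * (?h2 d * indicator A ((a * b) *s w + b *s c + d))
            \<partial>lborel \<partial>lborel \<partial>lborel \<partial>lborel)"
      by (subst nn_integral_lborel_tuple4) (measurable, simp add: \<Phi>_def mult_ac)
    also have "\<dots> = (\<integral>\<^sup>+a. \<integral>\<^sup>+b. \<integral>\<^sup>+x. ?Q a b x \<partial>lborel \<partial>lborel \<partial>lborel)"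
      by (rule nn_integral_cong, rule nn_integral_cong, rule nn_integral_cgauss_noise_indicator[OF S1 S2 A])
    also have "\<dots> = (\<integral>\<^sup>+x. \<integral>\<^sup>+b. \<integral>\<^sup>+a. ?Q a b x \<partial>lborel \<partial>lborel \<partial>lborel)"
      by (rule nn_integral_lborel_rotate3[where f="\<lambda>(a, b, x). ?Q a b x", simplified]) measurable
    also have "\<dots> = (\<integral>\<^sup>+x. ?F x * indicator A x \<partial>lborel)"
    proof (rule nn_integral_cong)
      fix x
      let ?I = "\<lambda>b. \<integral>\<^sup>+a. p1 a * ?h b (x - (a * b) *s w) \<partial>lborel"
      have "(\<integral>\<^sup>+a. indicator A x * p2 b * (p1 a * ?h b (x - (a * b) *s w)) \<partial>lborel)
          = indicator A x * p2 b * ?I b" for b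
        by (rule nn_integral_cmult) measurable
      then have "(\<integral>\<^sup>+b. \<integral>\<^sup>+a. ?Q a b x \<partial>lborel \<partial>lborel) = (\<integral>\<^sup>+b. indicator A x * (p2 b * ?I b) \<partial>lborel)"
        by (simp add: mult_ac)
      also have "\<dots> = indicator A x * ?F x"
        by (rule nn_integral_cmult) measurable
      finally show "(\<integral>\<^sup>+b. \<integral>\<^sup>+a. ?Q a b x \<partial>lborel \<partial>lborel) = ?F x * indicator A x"
        by (simp add: mult.commute)
    qed
    finally show "(\<integral>\<^sup>+z. ?q z * indicator A (\<Phi> z) \<partial>lborel) = (\<integral>\<^sup>+x. ?F x * indicator A x \<partial>lborel)" .
  qed (fact \<Phi>, measurable)
  then show ?thesis
    by (simp add: \<Phi>_def)
qed

section \<open>Evaluation of the mixture through the integral I\<close>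

lemma nn_integral_indicator_exp_neg: "(\<integral>\<^sup>+x. ennreal (indicator {0..} x * exp (- x)) \<partial>lborel) = 1"
proof -
  interpret prob_space "density lborel (exponential_density 1)"
    by (rule prob_space_exponential_density) simp
  have "exponential_density 1 x = indicator {0..} x * exp (- x)" for x
    by (simp add: exponential_density_def split: split_indicator)
  then show ?thesis
    using emeasure_space_1 by (simp add: emeasure_density)
qed

lemma Iint_integrand_le:
  fixes x e1 e2 b1 b2 lam :: real
  assumes "x \<ge> 0" "e1 \<ge> 0" "e2 \<ge> 0" "lam \<ge> 0"
  shows "exp (- (x + b1 / (1 + e1 * x) + b2 / (1 + e2 * x))) / ((1 + e1 * x) powr lam * (1 + e2 * x))
    \<le> exp (\<bar>b1\<bar> + \<bar>b2\<bar>) * exp (- x)"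
proof -
  have A: "1 + e1 * x \<ge> 1" and B: "1 + e2 * x \<ge> 1"
    using assms by simp_all
  have div_ge: "- \<bar>b\<bar> \<le> b / D" if D: "D \<ge> 1" for b D :: real
  proof (cases "b \<ge> 0")
    case True
    then have "0 \<le> b / D"
      using D by simp
    with True show ?thesis
      by linarith
  next
    case False
    then have "b \<le> b / D"
      using D by (simp add: le_divide_eq mult_le_cancel_left1)
    with False show ?thesis
      by simp
  qed
  have "- \<bar>b1\<bar> \<le> b1 / (1 + e1 * x)" and "- \<bar>b2\<bar> \<le> b2 / (1 + e2 * x)"
    using div_ge A B by simp_all
  then have E: "exp (- (x + b1 / (1 + e1 * x) + b2 / (1 + e2 * x))) \<le> exp (\<bar>b1\<bar> + \<bar>b2\<bar>) * exp (- x)"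
    by (simp add: exp_add[symmetric])
  have "1 * 1 \<le> (1 + e1 * x) powr lam * (1 + e2 * x)"
    by (rule mult_mono[OF ge_one_powr_ge_zero[OF A assms(4)] B]) simp_all
  then have "exp (- (x + b1 / (1 + e1 * x) + b2 / (1 + e2 * x))) / ((1 + e1 * x) powr lam * (1 + e2 * x))
      \<le> exp (- (x + b1 / (1 + e1 * x) + b2 / (1 + e2 * x))) / 1"
    by (intro divide_left_mono) simp_all
  with E show ?thesis
    by simp
qed

lemma ennreal_Iint:
  assumes e1: "e1 \<ge> 0" and e2: "e2 \<ge> 0" and lam: "lam \<ge> 0"
  shows "ennreal (Iint e1 e2 b1 b2 lam) = (\<integral>\<^sup>+x. ennreal (indicator {0..} x *
      (exp (- (x + b1 / (1 + e1 * x) + b2 / (1 + e2 * x))) / ((1 + e1 * x) powr lam * (1 + e2 * x)))) \<partial>lborel)"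
proof -
  define \<psi> where "\<psi> x = indicator {0..} x *
      (exp (- (x + b1 / (1 + e1 * x) + b2 / (1 + e2 * x))) / ((1 + e1 * x) powr lam * (1 + e2 * x)))" for x
  have [measurable]: "\<psi> \<in> borel_measurable borel"
    unfolding \<psi>_def by measurable
  have nonneg: "\<psi> x \<ge> 0" for x
    unfolding \<psi>_def using e1 e2
    by (auto split: split_indicator intro!: divide_nonneg_pos mult_pos_pos add_pos_nonneg)
  have "\<psi> x \<le> exp (\<bar>b1\<bar> + \<bar>b2\<bar>) * (indicator {0..} x * exp (- x))" for x
    using Iint_integrand_le[of x e1 e2 lam b1 b2] e1 e2 lam by (simp add: \<psi>_def split: split_indicator)
  then have "(\<integral>\<^sup>+x. ennreal (\<psi> x) \<partial>lborel)
      \<le> (\<integral>\<^sup>+x. ennreal (exp (\<bar>b1\<bar> + \<bar>b2\<bar>)) * ennreal (indicator {0..} x * exp (- x)) \<partial>lborel)"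
    by (intro nn_integral_mono) (simp add: ennreal_mult''[symmetric] ennreal_leI)
  also have "\<dots> = ennreal (exp (\<bar>b1\<bar> + \<bar>b2\<bar>))"
    by (simp add: nn_integral_cmult nn_integral_indicator_exp_neg)
  finally have "integrable lborel \<psi>"
    using nonneg by (intro integrableI_nonneg) (auto simp: top.not_eq_extremum le_less_trans)
  moreover have "Iint e1 e2 b1 b2 lam = integral\<^sup>L lborel \<psi>"
    unfolding Iint_def set_lebesgue_integral_def \<psi>_def by simp
  ultimately have "ennreal (Iint e1 e2 b1 b2 lam) = (\<integral>\<^sup>+x. ennreal (\<psi> x) \<partial>lborel)"
    using nonneg by (simp add: nn_integral_eq_integral)
  then show ?thesis
    by (simp only: \<psi>_def)
qed

text \<open>The density at \<open>x\<close> of \<open>X1 X2 w + X2 u + v\<close> given \<open>|X2|\<^sup>2 = t\<close>, where \<open>K = \<parallel>w\<parallel>\<^sup>2\<close>,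
  \<open>q = |\<langle>w, x\<rangle>|\<^sup>2\<close>, \<open>Y = \<parallel>x\<parallel>\<^sup>2\<close> and \<open>n\<close> is the dimension.\<close>

definition cond_density :: "real \<Rightarrow> real \<Rightarrow> real \<Rightarrow> real \<Rightarrow> real \<Rightarrow> real \<Rightarrow> nat \<Rightarrow> real \<Rightarrow> real" where
  "cond_density Om1 S1 S2 K q Y n t =
     (t * S1 + S2) / (t * S1 + S2 + Om1 * (t * K)) / (pi * (t * S1 + S2)) ^ n
     * exp (- Y / (t * S1 + S2) + Om1 * (t * q) / ((t * S1 + S2) * (t * S1 + S2 + Om1 * (t * K))))"

lemma exp_mult_cond_density:
  assumes tau: "tau \<ge> 0" and pos: "Om1 > 0" "Om2 > 0" "S1 > 0" "S2 > 0" and K: "K > 0" and n: "n \<ge> 1"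
  defines "e1 \<equiv> Om2 * S1 / S2" and "e2 \<equiv> (1 + Om1 / S1 * K) * (Om2 * S1 / S2)"
  shows "exp (- tau) * cond_density Om1 S1 S2 K q Y n (Om2 * tau)
    = 1 / (pi * S2) ^ n * (exp (- (tau + ((Y - q / K) / S2) / (1 + e1 * tau) + (q / (K * S2)) / (1 + e2 * tau)))
      / ((1 + e1 * tau) powr (real n - 1) * (1 + e2 * tau)))"
proof -
  define A where "A = 1 + e1 * tau"
  define B where "B = 1 + e2 * tau"
  have A: "A \<ge> 1" and B: "B \<ge> 1"
    using tau pos K by (simp_all add: A_def B_def e1_def e2_def)
  have S: "Om2 * tau * S1 + S2 = S2 * A" and S': "S2 * A + Om1 * (Om2 * tau * K) = S2 * B"
    using pos by (simp_all add: A_def B_def e1_def e2_def field_simps)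
  have BA: "B - A = Om1 * K * Om2 * tau / S2"
    using pos by (simp add: A_def B_def e1_def e2_def field_simps)
  have "S2 * A / (S2 * B) / (pi * (S2 * A)) ^ n = 1 / (pi * S2) ^ n / (A ^ (n - 1) * B)"
    using A B pos n power_minus_mult[of n A] by (simp add: power_mult_distrib field_simps)
  moreover have "A ^ (n - 1) = A powr (real n - 1)"
    using A n by (simp add: powr_realpow[symmetric] of_nat_diff)
  moreover have "- Y / (S2 * A) + Om1 * (Om2 * tau * q) / (S2 * A * (S2 * B))
      = - (((Y - q / K) / S2) / A + (q / (K * S2)) / B)"
  proof -
    have "Om1 * (Om2 * tau * q) / (S2 * A * (S2 * B)) = q / (K * S2) * ((B - A) / (A * B))"
      unfolding BA using pos K A B by (simp add: field_simps power2_eq_square)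
    also have "\<dots> = q / (K * S2) / A - q / (K * S2) / B"
      using A B pos K by (simp add: field_simps)
    finally have "Om1 * (Om2 * tau * q) / (S2 * A * (S2 * B)) = q / (K * S2) / A - q / (K * S2) / B" .
    moreover have "(Y - q / K) / S2 / A = Y / (S2 * A) - q / (K * S2) / A"
      using pos K A by (simp add: field_simps)
    ultimately show ?thesis
      by simp
  qed
  ultimately have "exp (- tau) * cond_density Om1 S1 S2 K q Y n (Om2 * tau)
      = exp (- tau) * (1 / (pi * S2) ^ n / (A powr (real n - 1) * B) * exp (- (((Y - q / K) / S2) / A + (q / (K * S2)) / B)))"
    by (simp only: cond_density_def S S')
  also have "\<dots> = 1 / (pi * S2) ^ n * (exp (- (tau + ((Y - q / K) / S2) / A + (q / (K * S2)) / B))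
      / (A powr (real n - 1) * B))"
    by (simp add: exp_add[symmetric] exp_diff)
  finally show ?thesis
    by (simp add: A_def B_def)
qed

lemma nn_integral_cgauss_cond_density:
  fixes w x :: "complex^'n"
  assumes pos: "Om1 > 0" "S1 > 0" "S2 > 0"
  shows "(\<integral>\<^sup>+a. ennreal (cgauss_density Om1 a) * ennreal (cgauss_cov_density ((cmod b)\<^sup>2 * S1 + S2) (x - (a * b) *s w)) \<partial>lborel)
    = ennreal (cond_density Om1 S1 S2 ((norm w)\<^sup>2) ((cmod (vec_cinner w x))\<^sup>2) ((norm x)\<^sup>2) CARD('n) ((cmod b)\<^sup>2))"
proof -
  have "vec_cinner (b *s w) x = cnj b * vec_cinner w x"
    by (simp add: vec_cinner_def sum_distrib_left mult_ac)
  moreover have "cgauss_density Om1 a \<ge> 0" for a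
    using pos by (simp add: cgauss_density_def)
  moreover have "(cmod b)\<^sup>2 * S1 + S2 > 0"
    using pos by (simp add: add_nonneg_pos)
  ultimately show ?thesis
    using nn_integral_cgauss_rank_one[of Om1 "(cmod b)\<^sup>2 * S1 + S2" x "b *s w"] pos
    by (simp add: ennreal_mult'[symmetric] cond_density_def norm_vector_scalar_mult power_mult_distrib norm_mult)
qed

lemma nn_integral_cascaded_gaussian_eq_Iint:
  fixes w x :: "complex^'n"
  assumes pos: "Om1 > 0" "Om2 > 0" "S1 > 0" "S2 > 0" and w: "w \<noteq> 0"
  shows "(\<integral>\<^sup>+b. ennreal (cgauss_density Om2 b) * (\<integral>\<^sup>+a. ennreal (cgauss_density Om1 a)
        * ennreal (cgauss_cov_density ((cmod b)\<^sup>2 * S1 + S2) (x - (a * b) *s w)) \<partial>lborel) \<partial>lborel)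
    = ennreal (1 / (pi * S2) ^ CARD('n) *
        Iint (Om2 * S1 / S2) ((1 + Om1 / S1 * (norm w)\<^sup>2) * (Om2 * S1 / S2))
          (((norm x)\<^sup>2 - (cmod (vec_cinner w x))\<^sup>2 / (norm w)\<^sup>2) / S2)
          ((cmod (vec_cinner w x))\<^sup>2 / ((norm w)\<^sup>2 * S2))
          (real CARD('n) - 1))"
proof -
  define K where "K = (norm w)\<^sup>2"
  define q where "q = (cmod (vec_cinner w x))\<^sup>2"
  define Y where "Y = (norm x)\<^sup>2"
  define n where "n = CARD('n)"
  define e1 where "e1 = Om2 * S1 / S2"
  define e2 where "e2 = (1 + Om1 / S1 * K) * (Om2 * S1 / S2)"
  define C where "C = 1 / (pi * S2) ^ n"
  let ?R = "cond_density Om1 S1 S2 K q Y n"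
  have K: "K > 0"
    using w by (simp add: K_def)
  have n: "n \<ge> 1"
    by (simp add: n_def Suc_le_eq)
  have "(\<integral>\<^sup>+b. ennreal (cgauss_density Om2 b) * (\<integral>\<^sup>+a. ennreal (cgauss_density Om1 a)
        * ennreal (cgauss_cov_density ((cmod b)\<^sup>2 * S1 + S2) (x - (a * b) *s w)) \<partial>lborel) \<partial>lborel)
      = (\<integral>\<^sup>+tau. ennreal (exp (- tau)) * ennreal (?R (Om2 * tau)) * indicator {0..} tau \<partial>lborel)"
    unfolding K_def q_def Y_def n_def nn_integral_cgauss_cond_density[OF pos(1,3,4)]
    by (rule nn_integral_cgauss_density_radial[OF pos(2)]) (simp add: cond_density_def)
  also have "\<dots> = (\<integral>\<^sup>+tau. ennreal C * ennreal (indicator {0..} tau * (exp (- (tau + ((Y - q / K) / S2) / (1 + e1 * tau)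
      + (q / (K * S2)) / (1 + e2 * tau))) / ((1 + e1 * tau) powr (real n - 1) * (1 + e2 * tau)))) \<partial>lborel)"
    using exp_mult_cond_density[OF _ pos K n] pos
    by (intro nn_integral_cong) (auto simp: C_def e1_def e2_def ennreal_mult'[symmetric] split: split_indicator)
  also have "\<dots> = ennreal C * ennreal (Iint e1 e2 ((Y - q / K) / S2) (q / (K * S2)) (real n - 1))"
  proof -
    have "e1 \<ge> 0" "e2 \<ge> 0" "real n - 1 \<ge> 0"
      using pos K n by (simp_all add: e1_def e2_def)
    then show ?thesis
      by (subst ennreal_Iint) (simp_all add: nn_integral_cmult)
  qed
  also have "\<dots> = ennreal (C * Iint e1 e2 ((Y - q / K) / S2) (q / (K * S2)) (real n - 1))"
    using pos by (intro ennreal_mult'[symmetric]) (simp add: C_def)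
  finally show ?thesis
    by (simp add: C_def e1_def e2_def K_def q_def Y_def n_def)
qed

theorem distributed_cascaded_gaussian:
  fixes P :: "'a measure" and X1 X2 :: "'a \<Rightarrow> complex" and u v :: "'a \<Rightarrow> complex^'n" and w :: "complex^'n"
  assumes P: "prob_space P" and pos: "Om1 > 0" "Om2 > 0" "s1 > 0" "s2 > 0" and w: "w \<noteq> 0"
    and D1: "distributed P lborel X1 (\<lambda>z. ennreal (cgauss_density Om1 z))"
    and D2: "distributed P lborel X2 (\<lambda>z. ennreal (cgauss_density Om2 z))"
    and Du: "distributed P lborel u (\<lambda>z. ennreal (cgauss_vec_density s1 z))"
    and Dv: "distributed P lborel v (\<lambda>z. ennreal (cgauss_vec_density s2 z))"
    and I1: "indep_rv P X1 (\<lambda>\<omega>. (X2 \<omega>, u \<omega>, v \<omega>))"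
    and I2: "indep_rv P X2 (\<lambda>\<omega>. (u \<omega>, v \<omega>))"
    and I3: "indep_rv P u v"
  shows "distributed P lborel (\<lambda>\<omega>. (X1 \<omega> * X2 \<omega>) *s w + X2 \<omega> *s u \<omega> + v \<omega>)
    (\<lambda>x. ennreal (1 / (pi * s2\<^sup>2) ^ CARD('n) *
      Iint (Om2 * s1\<^sup>2 / s2\<^sup>2) ((1 + Om1 / s1\<^sup>2 * (norm w)\<^sup>2) * (Om2 * s1\<^sup>2 / s2\<^sup>2))
        (((norm x)\<^sup>2 - (cmod (vec_cinner w x))\<^sup>2 / (norm w)\<^sup>2) / s2\<^sup>2)
        ((cmod (vec_cinner w x))\<^sup>2 / ((norm w)\<^sup>2 * s2\<^sup>2))
        (real CARD('n) - 1)))"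
proof -
  have S: "s1\<^sup>2 > 0" "s2\<^sup>2 > 0"
    using pos by simp_all
  have "distributed P lborel u (\<lambda>z. ennreal (cgauss_cov_density (s1\<^sup>2) z))"
    and "distributed P lborel v (\<lambda>z. ennreal (cgauss_cov_density (s2\<^sup>2) z))"
    using Du Dv by (simp_all add: cgauss_vec_density_eq_cov)
  from distributed_cascaded_gaussian_mixture[OF P S D1 D2 this I1 I2 I3, where w=w]
  show ?thesis
    by (simp only: nn_integral_cascaded_gaussian_eq_Iint[OF pos(1,2) S w])
qed

lemma norm_vector_1_c_square: "(norm (vector [1, c] :: complex^2))\<^sup>2 = 1 + (cmod c)\<^sup>2"
  by (simp add: norm_vec_complex_square sum_2)

lemma vec_cinner_vector_1_c: "vec_cinner (vector [1, c] :: complex^2) x = x $ 1 + cnj c * x $ 2"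
  by (simp add: vec_cinner_def sum_2)

lemma norm_square_minus_vec_cinner_vector_1_c:
  fixes x :: "complex^2"
  shows "(norm x)\<^sup>2 - (cmod (x $ 1 + cnj c * x $ 2))\<^sup>2 / (1 + (cmod c)\<^sup>2)
    = (cmod (x $ 2 - c * x $ 1))\<^sup>2 / (1 + (cmod c)\<^sup>2)"
proof -
  have "1 + (cmod c)\<^sup>2 > 0"
    by (simp add: add_pos_nonneg)
  moreover have "((cmod (x $ 1))\<^sup>2 + (cmod (x $ 2))\<^sup>2) * (1 + (cmod c)\<^sup>2) - (cmod (x $ 1 + cnj c * x $ 2))\<^sup>2
      = (cmod (x $ 2 - c * x $ 1))\<^sup>2"
    unfolding cmod_power2 by (simp add: algebra_simps power2_eq_square)
  ultimately show ?thesis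
    by (simp add: norm_vec_complex_square sum_2 field_simps)
qed

lemma norm_axis_1_square: "(norm (axis p (1::complex) :: complex^'m))\<^sup>2 = 1"
proof -
  have "(cmod (axis p (1::complex) $ i))\<^sup>2 = (if i = p then 1 else 0)" for i
    by (simp add: axis_def)
  then show ?thesis
    by (simp add: norm_vec_complex_square)
qed

lemma vec_cinner_axis_1: "vec_cinner (axis p 1 :: complex^'m) y = y $ p"
proof -
  have "cnj (axis p 1 $ i) * y $ i = (if i = p then y $ p else 0)" for i
    by (simp add: axis_def)
  then show ?thesis
    by (simp add: vec_cinner_def)
qed

theorem lemma1:
  fixes P :: "'a measure"
    and Om1 Om2 sigma1 sigma2 :: real
    and p :: "'m::finite"
    and c :: complex
    and X1 X2 :: "'a \<Rightarrow> complex"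
    and x1 x2 :: "'a \<Rightarrow> complex ^ 2"
    and y1 y2 :: "'a \<Rightarrow> complex ^ 'm"
  assumes "prob_space P"
    and "Om1 > 0" "Om2 > 0" "sigma1 > 0" "sigma2 > 0"
    and "CARD('m) \<ge> 2"
    and "distributed P lborel X1 (\<lambda>z. ennreal (cgauss_density Om1 z))"
    and "distributed P lborel X2 (\<lambda>z. ennreal (cgauss_density Om2 z))"
    and "distributed P lborel x1 (\<lambda>z. ennreal (cgauss_vec_density sigma1 z))"
    and "distributed P lborel x2 (\<lambda>z. ennreal (cgauss_vec_density sigma2 z))"
    and "distributed P lborel y1 (\<lambda>z. ennreal (cgauss_vec_density sigma1 z))"
    and "distributed P lborel y2 (\<lambda>z. ennreal (cgauss_vec_density sigma2 z))"
    and "indep_rv P X1 (\<lambda>w. (X2 w, x1 w, x2 w, y1 w, y2 w))"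
    and "indep_rv P X2 (\<lambda>w. (x1 w, x2 w, y1 w, y2 w))"
    and "indep_rv P x1 (\<lambda>w. (x2 w, y1 w, y2 w))"
    and "indep_rv P x2 (\<lambda>w. (y1 w, y2 w))"
    and "indep_rv P y1 y2"
  shows
    "distributed P lborel
       (\<lambda>w. (X1 w * X2 w) *s vector [1, c] + X2 w *s x1 w + x2 w)
       (\<lambda>x. ennreal (1 / (pi * sigma2\<^sup>2)\<^sup>2 *
          Iint (Om2 * sigma1\<^sup>2 / sigma2\<^sup>2)
               ((1 + Om1 / sigma1\<^sup>2 * (1 + (cmod c)\<^sup>2)) * (Om2 * sigma1\<^sup>2 / sigma2\<^sup>2))
               ((cmod (x $ 2 - c * x $ 1))\<^sup>2 / ((1 + (cmod c)\<^sup>2) * sigma2\<^sup>2))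
               ((cmod (x $ 1 + cnj c * x $ 2))\<^sup>2 / ((1 + (cmod c)\<^sup>2) * sigma2\<^sup>2))
               1))
     \<and> distributed P lborel
       (\<lambda>w. (X1 w * X2 w) *s axis p 1 + X2 w *s y1 w + y2 w)
       (\<lambda>y. ennreal (1 / (pi * sigma2\<^sup>2) ^ CARD('m) *
          Iint (Om2 * sigma1\<^sup>2 / sigma2\<^sup>2)
               ((1 + Om1 / sigma1\<^sup>2) * (Om2 * sigma1\<^sup>2 / sigma2\<^sup>2))
               (((norm y)\<^sup>2 - (cmod (y $ p))\<^sup>2) / sigma2\<^sup>2)
               ((cmod (y $ p))\<^sup>2 / sigma2\<^sup>2)
               (real CARD('m) - 1)))"
proof -
  have indep_x: "indep_rv P X1 (\<lambda>\<omega>. (X2 \<omega>, x1 \<omega>, x2 \<omega>))" "indep_rv P X2 (\<lambda>\<omega>. (x1 \<omega>, x2 \<omega>))" "indep_rv P x1 x2"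
    using indep_rv_compose[OF assms(13) borel_measurable_continuous_onI, of "\<lambda>p. (fst p, fst (snd p), fst (snd (snd p)))"]
      indep_rv_compose[OF assms(14) borel_measurable_continuous_onI, of "\<lambda>p. (fst p, fst (snd p))"]
      indep_rv_compose[OF assms(15) borel_measurable_continuous_onI, of fst]
    by (simp_all add: continuous_intros)
  have indep_y: "indep_rv P X1 (\<lambda>\<omega>. (X2 \<omega>, y1 \<omega>, y2 \<omega>))" "indep_rv P X2 (\<lambda>\<omega>. (y1 \<omega>, y2 \<omega>))"
    using indep_rv_compose[OF assms(13) borel_measurable_continuous_onI, of "\<lambda>p. (fst p, snd (snd (snd p)))"]
      indep_rv_compose[OF assms(14) borel_measurable_continuous_onI, of "\<lambda>p. snd (snd p)"]
    by (simp_all add: continuous_intros)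
  have "vector [1, c] \<noteq> (0 :: complex^2)"
    by (metis one_neq_zero vector_2(1) zero_index)
  moreover have "axis p 1 \<noteq> (0 :: complex^'m)"
    using norm_axis_1_square[of p] by auto
  ultimately show ?thesis
    using distributed_cascaded_gaussian[OF assms(1-5) _ assms(7-10) indep_x, of "vector [1, c]"]
      distributed_cascaded_gaussian[OF assms(1-5) _ assms(7,8,11,12) indep_y assms(17), of "axis p 1"]
    by (simp add: norm_vector_1_c_square vec_cinner_vector_1_c norm_square_minus_vec_cinner_vector_1_c
        norm_axis_1_square vec_cinner_axis_1)
qed

end
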